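(* Let $G=(V,E)$ be a $d$-regular graph on $n$ vertices and let $0<\varepsilon<1/3$. Assume $$(d+1)(d^2+1)\cdot 2\exp\!\left(-\tfrac13\varepsilon^2\left\lfloor \tfrac{n}{d^2+1}\right\rfloor\cdot\tfrac{1}{d+1}\right)<1.$$ Then there is a spanning subgraph $H$ of $G$ such that for every integer $0\le k\le d$, $$\left|m(H,k)-\frac{n}{d+1}\right|\le \varepsilon\frac{n}{d+1}.$$
   Context: All graphs are finite and simple. For a graph $G$ and integer $k\ge0$, $m(G,k)$ is the number of vertices of degree exactly $k$ in $G$. A spanning subgraph has the same vertex set as $G$. *)

theory Defs
  imports "HOL-Analysis.Analysis"
begin

definition simple_graph :: "'a set \<Rightarrow> 'a set set \<Rightarrow> bool" where
  "simple_graph V E \<longleftrightarrow> finite V \<and> (\<forall>e\<in>E. e \<subseteq> V \<and> card e = 2)"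

definition degree :: "'a set set \<Rightarrow> 'a \<Rightarrow> nat" where
  "degree E v = card {e\<in>E. v \<in> e}"

definition regular :: "'a set \<Rightarrow> 'a set set \<Rightarrow> nat \<Rightarrow> bool" where
  "regular V E d \<longleftrightarrow> (\<forall>v\<in>V. degree E v = d)"

definition mdeg :: "'a set \<Rightarrow> 'a set set \<Rightarrow> nat \<Rightarrow> nat" where
  "mdeg V E k = card {v\<in>V. degree E v = k}"

definition spanning_subgraph :: "'a set \<Rightarrow> 'a set set \<Rightarrow> 'a set set \<Rightarrow> bool" where
  "spanning_subgraph V E F \<longleftrightarrow> F \<subseteq> E"

end

theory Submission
  imports Defs "HOL-Probability.Probability" "HOL-Combinatorics.Permutations"
begin

text \<open>
  Label the vertices independently and uniformly by numbers below \<open>M\<close> and keep an edge iff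
  its two labels add up to at most \<open>M - 2\<close>. Reflecting the label of \<open>v\<close> turns the
  degree of \<open>v\<close> in this subgraph into the rank of \<open>v\<close> among its closed neighbourhood,
  which for large \<open>M\<close> is nearly uniform on \<open>{0..d}\<close>. A greedy colouring with
  \<open>d\<^sup>2 + 1\<close> colours makes the closed neighbourhoods inside a colour class disjoint, so
  within a class the degrees are independent and a Chernoff bound applies to the number of
  vertices of each degree. A union bound over the \<open>(d + 1)(d\<^sup>2 + 1)\<close> pairs of
  class and degree then yields a labelling whose degree counts are all close to
  \<open>n / (d + 1)\<close>.
\<close>

section \<open>Neighbourhoods and colourings\<close>

definition nbr :: "'a set set \<Rightarrow> 'a \<Rightarrow> 'a set" where
  "nbr E v = {u. {u, v} \<in> E}"

definition cnbr :: "'a set set \<Rightarrow> 'a \<Rightarrow> 'a set" where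
  "cnbr E v = insert v (nbr E v)"

lemma mem_nbr_commute: "u \<in> nbr E v \<longleftrightarrow> v \<in> nbr E u"
  by (simp add: nbr_def insert_commute)

lemma nbr_subset:
  assumes "simple_graph V E" shows "nbr E v \<subseteq> V"
  using assms unfolding simple_graph_def nbr_def by auto

lemma not_mem_nbr:
  assumes "simple_graph V E" shows "v \<notin> nbr E v"
proof
  assume "v \<in> nbr E v"
  then have "card {v, v} = 2" using assms unfolding simple_graph_def nbr_def by blast
  then show False by simp
qed

lemma finite_nbr:
  assumes "simple_graph V E" shows "finite (nbr E v)"
  using assms nbr_subset[OF assms] unfolding simple_graph_def by (meson finite_subset)

lemma finite_cnbr:
  assumes "simple_graph V E" shows "finite (cnbr E v)"
  using finite_nbr[OF assms] by (simp add: cnbr_def)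

lemma degree_eq_card_nbr:
  assumes "simple_graph V E" "F \<subseteq> E"
  shows "degree F v = card (nbr F v)"
proof -
  have "bij_betw (\<lambda>u. {u, v}) (nbr F v) {e\<in>F. v \<in> e}"
  proof (rule bij_betwI')
    fix x y assume "x \<in> nbr F v" "y \<in> nbr F v"
    then have "x \<noteq> v" using not_mem_nbr[OF assms(1)] assms(2) by (auto simp: nbr_def)
    then show "({x, v} = {y, v}) = (x = y)" by (metis doubleton_eq_iff)
  next
    fix e assume e: "e \<in> {e\<in>F. v \<in> e}"
    then have "card e = 2" using assms unfolding simple_graph_def by auto
    then obtain a b where "e = {a, b}" "a \<noteq> b" by (meson card_2_iff)
    with e obtain u where "e = {u, v}" by (auto simp: insert_commute)
    with e show "\<exists>u\<in>nbr F v. e = {u, v}" by (auto simp: nbr_def)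
  qed (auto simp: nbr_def)
  then show ?thesis unfolding degree_def by (simp add: bij_betw_same_card)
qed

lemma card_nbr_regular:
  assumes "simple_graph V E" "regular V E d" "v \<in> V"
  shows "card (nbr E v) = d"
  using degree_eq_card_nbr[OF assms(1) order_refl] assms(2,3) unfolding regular_def by simp

lemma card_cnbr_regular:
  assumes "simple_graph V E" "regular V E d" "v \<in> V"
  shows "card (cnbr E v) = d + 1"
  using card_nbr_regular[OF assms] finite_nbr[OF assms(1)] not_mem_nbr[OF assms(1)]
  by (simp add: cnbr_def)

lemma exists_fresh_le:
  fixes A :: "nat set"
  assumes "finite A" "card A \<le> D"
  shows "\<exists>a\<le>D. a \<notin> A"
proof (rule ccontr)
  assume "\<not> (\<exists>a\<le>D. a \<notin> A)"
  then have "{..D} \<subseteq> A" by auto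
  then show False using card_mono[OF assms(1)] assms(2) by (metis card_atMost not_less_eq_eq)
qed

lemma greedy_colouring:
  assumes "finite V" and sym: "\<And>u w. R u w \<Longrightarrow> R w u"
    and "\<And>v. v \<in> V \<Longrightarrow> card {w\<in>V. w \<noteq> v \<and> R v w} \<le> D"
  shows "\<exists>c. (\<forall>v\<in>V. c v \<le> D) \<and> (\<forall>u\<in>V. \<forall>w\<in>V. u \<noteq> w \<and> R u w \<longrightarrow> c u \<noteq> c w)"
  using assms(1,3)
proof (induction V rule: finite_induct)
  case empty
  then show ?case by auto
next
  case (insert x V)
  have "card {w\<in>V. w \<noteq> v \<and> R v w} \<le> card {w\<in>insert x V. w \<noteq> v \<and> R v w}" for v
    using insert.hyps(1) by (intro card_mono) auto
  then have "card {w\<in>V. w \<noteq> v \<and> R v w} \<le> D" if "v \<in> V" for v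
    using insert.prems[of v] that le_trans by blast
  then have "\<exists>c. (\<forall>v\<in>V. c v \<le> D) \<and> (\<forall>u\<in>V. \<forall>w\<in>V. u \<noteq> w \<and> R u w \<longrightarrow> c u \<noteq> c w)"
    by (rule insert.IH)
  then obtain c where
    c: "\<forall>v\<in>V. c v \<le> D" "\<forall>u\<in>V. \<forall>w\<in>V. u \<noteq> w \<and> R u w \<longrightarrow> c u \<noteq> c w"
    by (elim exE conjE)
  have "card (c ` {w\<in>V. R x w}) \<le> card {w\<in>V. R x w}"
    using insert.hyps(1) by (intro card_image_le) auto
  also have "\<dots> \<le> card {w\<in>insert x V. w \<noteq> x \<and> R x w}"
    using insert.hyps by (intro card_mono) auto
  also have "\<dots> \<le> D" using insert.prems[of x] by simp
  finally obtain a where a: "a \<le> D" "a \<notin> c ` {w\<in>V. R x w}"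
    using exists_fresh_le[of "c ` {w\<in>V. R x w}"] insert.hyps(1) by auto
  have fresh: "a \<noteq> c w" if "w \<in> V" "R x w" for w
    using a(2) that by blast
  show ?case
  proof (intro exI[of _ "c(x := a)"] conjI ballI impI)
    fix v assume "v \<in> insert x V"
    then show "(c(x := a)) v \<le> D" using c(1) a(1) by auto
  next
    fix u w assume "u \<in> insert x V" "w \<in> insert x V" "u \<noteq> w \<and> R u w"
    then show "(c(x := a)) u \<noteq> (c(x := a)) w"
      using c(2) fresh[of u] fresh[of w] sym[of u w] insert.hyps(2)
      by (cases "u = x"; cases "w = x") auto
  qed
qed

lemma distance2_colouring:
  assumes G: "simple_graph V E" "regular V E d"
  shows "\<exists>c. (\<forall>v\<in>V. c v \<le> d^2) \<and>
     (\<forall>u\<in>V. \<forall>w\<in>V. u \<noteq> w \<and> c u = c w \<longrightarrow> cnbr E u \<inter> cnbr E w = {})"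
proof -
  define R where "R u w \<longleftrightarrow> cnbr E u \<inter> cnbr E w \<noteq> {}" for u w
  have few_conflicts: "card {w\<in>V. w \<noteq> v \<and> R v w} \<le> d^2" if v: "v \<in> V" for v
  proof -
    have "{w\<in>V. w \<noteq> v \<and> R v w} \<subseteq> nbr E v \<union> (\<Union>u\<in>nbr E v. nbr E u - {v})"
      using mem_nbr_commute[of _ E] by (auto simp: R_def cnbr_def)
    then have "card {w\<in>V. w \<noteq> v \<and> R v w} \<le> card (nbr E v \<union> (\<Union>u\<in>nbr E v. nbr E u - {v}))"
      using finite_nbr[OF G(1)] by (intro card_mono) auto
    also have "\<dots> \<le> card (nbr E v) + (\<Sum>u\<in>nbr E v. card (nbr E u - {v}))"
      using card_Un_le card_UN_le[OF finite_nbr[OF G(1)]] add_left_mono le_trans by blast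
    also have "\<dots> = d + d * (d - 1)"
    proof -
      have "card (nbr E u - {v}) = d - 1" if "u \<in> nbr E v" for u
      proof -
        have "u \<in> V" "v \<in> nbr E u"
          using that nbr_subset[OF G(1)] mem_nbr_commute[THEN iffD1, OF that] by auto
        then show ?thesis using card_nbr_regular[OF G] finite_nbr[OF G(1)] by simp
      qed
      then show ?thesis using card_nbr_regular[OF G v] by simp
    qed
    also have "\<dots> \<le> d^2" by (cases d) (auto simp: power2_eq_square)
    finally show ?thesis .
  qed
  have "\<exists>c. (\<forall>v\<in>V. c v \<le> d^2) \<and> (\<forall>u\<in>V. \<forall>w\<in>V. u \<noteq> w \<and> R u w \<longrightarrow> c u \<noteq> c w)"
  proof (rule greedy_colouring)
    show "finite V" using G(1) by (simp add: simple_graph_def)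
    show "R w u" if "R u w" for u w using that by (auto simp: R_def)
  qed (rule few_conflicts)
  then show ?thesis unfolding R_def by (metis (no_types, lifting))
qed

section \<open>Chernoff bounds for sums of independent indicators\<close>

lemma exp_le_pade:
  fixes s :: real assumes "0 \<le> s" "s < 2"
  shows "exp s \<le> (2 + s) / (2 - s)"
proof -
  define g where "g x = ln (2 + x) - ln (2 - x) - x" for x :: real
  have "g 0 \<le> g s"
  proof (rule DERIV_nonneg_imp_nondecreasing[OF assms(1)])
    fix x :: real assume x: "0 \<le> x" "x \<le> s"
    have pos: "0 < 2 - x" "0 < 2 + x" using x assms by auto
    have "DERIV g x :> 1 / (2 + x) + 1 / (2 - x) - 1"
      unfolding g_def using pos by (auto intro!: derivative_eq_intros)
    moreover have "1 / (2 + x) + 1 / (2 - x) = 4 / ((2 + x) * (2 - x))"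
      using pos by (simp add: field_simps)
    moreover have "(2 + x) * (2 - x) \<le> 4" by (simp add: algebra_simps)
    then have "1 \<le> 4 / ((2 + x) * (2 - x))" using pos by simp
    ultimately show "\<exists>y. DERIV g x :> y \<and> y \<ge> 0" by auto
  qed
  then have "s \<le> ln ((2 + s) / (2 - s))" using assms by (simp add: g_def ln_div)
  then show ?thesis using assms by (simp add: ln_ge_iff)
qed

lemma exp_le_quadratic_nonpos:
  fixes s :: real assumes "s \<le> 0"
  shows "exp s \<le> 1 + s + s^2 / 2"
proof -
  define g where "g x = 1 + x + x^2 / 2 - exp x" for x :: real
  have "g 0 \<le> g s"
  proof (rule DERIV_nonpos_imp_nonincreasing[OF assms])
    fix x :: real
    have "DERIV g x :> 1 + x - exp x"
      unfolding g_def by (auto intro!: derivative_eq_intros simp: power2_eq_square)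
    moreover have "1 + x - exp x \<le> 0" using exp_ge_add_one_self[of x] by simp
    ultimately show "\<exists>y. DERIV g x :> y \<and> y \<le> 0" by blast
  qed
  then show ?thesis by (simp add: g_def)
qed

lemma exp_minus_one_minus_le:
  fixes s :: real assumes "\<bar>s\<bar> < 2"
  shows "exp s - 1 - s \<le> s^2 / (2 - \<bar>s\<bar>)"
proof (cases "s \<ge> 0")
  case True
  have "exp s - 1 - s \<le> (2 + s) / (2 - s) - 1 - s" using exp_le_pade[OF True] assms True by simp
  also have "\<dots> = s^2 / (2 - s)" using assms True by (simp add: field_simps power2_eq_square)
  finally show ?thesis using True by simp
next
  case False
  have "exp s - 1 - s \<le> s^2 / 2" using exp_le_quadratic_nonpos[of s] False by simp
  also have "\<dots> \<le> s^2 / (2 - \<bar>s\<bar>)" using assms by (intro divide_left_mono) auto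
  finally show ?thesis .
qed

lemma expectation_exp_card_le:
  fixes N :: "'b pmf" and Y :: "'v \<Rightarrow> 'b \<Rightarrow> bool" and s :: real
  assumes fin: "finite C"
    and ind: "prob_space.indep_vars (measure_pmf N) (\<lambda>_. count_space UNIV) Y C"
  shows "measure_pmf.expectation N (\<lambda>x. exp (s * card {v\<in>C. Y v x}))
           \<le> exp ((\<Sum>v\<in>C. measure_pmf.prob N {x. Y v x}) * (exp s - 1))"
proof -
  define p where "p v = measure_pmf.prob N {x. Y v x}" for v
  have factor: "exp (s * card {v\<in>C. Y v x}) = (\<Prod>v\<in>C. exp (s * of_bool (Y v x)))" for x
    using fin by (simp add: exp_sum[symmetric] sum_distrib_left Int_def)
  have single: "measure_pmf.expectation N (\<lambda>x. exp (s * of_bool (Y v x))) = 1 + p v * (exp s - 1)"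
    for v
  proof -
    have "(\<lambda>x. exp (s * of_bool (Y v x))) = (\<lambda>x. 1 + (exp s - 1) * indicator {x. Y v x} x)"
      by (auto simp: indicator_def)
    moreover have "integrable (measure_pmf N) (indicator {x. Y v x} :: _ \<Rightarrow> real)"
      by (rule measure_pmf.integrable_const_bound[where B = 1]) (auto simp: indicator_def)
    ultimately show ?thesis by (simp add: p_def mult.commute)
  qed
  have "prob_space.indep_vars (measure_pmf N) (\<lambda>_. borel) (\<lambda>v x. exp (s * of_bool (Y v x))) C"
    by (rule prob_space.indep_vars_compose2[OF measure_pmf.prob_space_axioms ind]) auto
  then have "measure_pmf.expectation N (\<lambda>x. \<Prod>v\<in>C. exp (s * of_bool (Y v x))) =
      (\<Prod>v\<in>C. 1 + p v * (exp s - 1))"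
    unfolding single[symmetric]
    by (intro prob_space.indep_vars_lebesgue_integral[OF measure_pmf.prob_space_axioms fin]
        measure_pmf.integrable_const_bound[where B = "exp s + 1"]) auto
  also have "\<dots> \<le> (\<Prod>v\<in>C. exp (p v * (exp s - 1)))"
  proof (rule prod_mono)
    fix v
    have "0 \<le> p v" "p v \<le> 1" by (auto simp: p_def)
    then have "0 \<le> 1 - p v + p v * exp s" by (simp add: add_nonneg_nonneg)
    then show "0 \<le> 1 + p v * (exp s - 1) \<and> 1 + p v * (exp s - 1) \<le> exp (p v * (exp s - 1))"
      using exp_ge_add_one_self[of "p v * (exp s - 1)"] by (simp add: algebra_simps)
  qed
  also have "\<dots> = exp ((\<Sum>v\<in>C. p v) * (exp s - 1))"
    by (simp add: exp_sum[OF fin, symmetric] sum_distrib_right)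
  finally show ?thesis by (simp add: factor p_def)
qed

lemma chernoff_exponent_le:
  fixes c \<mu> t :: real
  assumes "\<bar>c\<bar> = 1" "0 \<le> \<mu>" "0 < t"
  defines "r \<equiv> t / (\<mu> + t)"
  shows "\<mu> * (exp (c * r) - 1 - c * r) - r * t \<le> - (t^2 / (2 * \<mu> + t))"
proof -
  have r: "0 < r" "r \<le> 1" using assms by (auto simp: r_def)
  have "exp (c * r) - 1 - c * r \<le> (c * r)^2 / (2 - \<bar>c * r\<bar>)"
    using exp_minus_one_minus_le[of "c * r"] assms(1) r by (simp add: abs_mult)
  also have "(c * r)^2 = r^2" using assms(1)
    by (metis abs_mult_self_eq mult.commute power2_eq_square power_mult_distrib mult_1)
  finally have "exp (c * r) - 1 - c * r \<le> r^2 / (2 - r)"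
    using assms(1) r by (simp add: abs_mult)
  then have "\<mu> * (exp (c * r) - 1 - c * r) \<le> \<mu> * (r^2 / (2 - r))"
    using assms(2) by (rule mult_left_mono)
  moreover have "\<mu> * (r^2 / (2 - r)) - r * t = - (t^2 / (2 * \<mu> + t))"
  proof -
    have "\<mu> + t > 0" "2 * \<mu> + t > 0" using assms by auto
    then show ?thesis unfolding r_def
      by (simp add: divide_simps) (simp add: algebra_simps power2_eq_square)
  qed
  ultimately show ?thesis by linarith
qed

lemma prob_card_deviation_le:
  fixes N :: "'b pmf" and Y :: "'v \<Rightarrow> 'b \<Rightarrow> bool" and c t L \<mu> :: real
  assumes fin: "finite C"
    and ind: "prob_space.indep_vars (measure_pmf N) (\<lambda>_. count_space UNIV) Y C"
    and \<mu>: "\<mu> = (\<Sum>v\<in>C. measure_pmf.prob N {x. Y v x})"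
    and c: "\<bar>c\<bar> = 1" and t: "t > 0" "L * (2 * \<mu> + t) \<le> t^2"
  shows "measure_pmf.prob N {x. t \<le> c * (card {v\<in>C. Y v x} - \<mu>)} \<le> exp (- L)"
proof -
  define X where "X x = real (card {v\<in>C. Y v x})" for x
  have \<mu>0: "\<mu> \<ge> 0" using \<mu> by (simp add: sum_nonneg)
  define r where "r = t / (\<mu> + t)"
  define s where "s = c * r"
  have r: "0 < r" using t \<mu>0 by (auto simp: r_def)
  define K where "K = exp (s * \<mu> + r * t)"
  have "{x. t \<le> c * (X x - \<mu>)} \<subseteq> {x\<in>space (measure_pmf N). K \<le> exp (s * X x)}"
  proof safe
    fix x assume "t \<le> c * (X x - \<mu>)"
    then have "r * t \<le> r * (c * (X x - \<mu>))" using r by (intro mult_left_mono) auto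
    then show "K \<le> exp (s * X x)" by (simp add: K_def s_def algebra_simps)
  qed simp
  then have "measure_pmf.prob N {x. t \<le> c * (X x - \<mu>)}
      \<le> measure_pmf.prob N {x\<in>space (measure_pmf N). K \<le> exp (s * X x)}"
    by (intro measure_pmf.finite_measure_mono) auto
  also have "\<dots> \<le> measure_pmf.expectation N (\<lambda>x. exp (s * X x)) / K"
  proof (rule integral_Markov_inequality_measure[where A = UNIV])
    have "s * X x \<le> \<bar>s\<bar> * card C" for x
      using card_mono[OF fin, of "{v\<in>C. Y v x}"] abs_ge_self[of s]
      by (simp add: X_def) (metis abs_ge_zero mult_mono of_nat_0_le_iff of_nat_le_iff)
    then show "integrable (measure_pmf N) (\<lambda>x. exp (s * X x))"
      by (intro measure_pmf.integrable_const_bound[where B = "exp (\<bar>s\<bar> * card C)"]) auto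
  qed (auto simp: K_def)
  also have "\<dots> \<le> exp (\<mu> * (exp s - 1)) / K"
    by (rule divide_right_mono)
      (use expectation_exp_card_le[OF fin ind, of s] in \<open>simp_all add: X_def \<mu> K_def\<close>)
  also have "\<dots> = exp (\<mu> * (exp s - 1 - s) - r * t)"
    unfolding K_def exp_diff[symmetric] by (rule arg_cong[where f = exp]) (simp add: algebra_simps)
  also have "\<dots> \<le> exp (- (t^2 / (2 * \<mu> + t)))"
    using chernoff_exponent_le[OF c \<mu>0 t(1)] by (simp add: s_def r_def)
  also have "exp (- (t^2 / (2 * \<mu> + t))) \<le> exp (- L)"
    using t \<mu>0 by (simp add: field_simps)
  finally show ?thesis by (simp add: X_def)
qed

lemma prob_abs_card_deviation_le:
  fixes N :: "'b pmf" and Y :: "'v \<Rightarrow> 'b \<Rightarrow> bool" and t L \<mu> :: real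
  assumes "finite C"
    and "prob_space.indep_vars (measure_pmf N) (\<lambda>_. count_space UNIV) Y C"
    and "\<mu> = (\<Sum>v\<in>C. measure_pmf.prob N {x. Y v x})"
    and "t > 0" "L * (2 * \<mu> + t) \<le> t^2"
  shows "measure_pmf.prob N {x. t \<le> \<bar>card {v\<in>C. Y v x} - \<mu>\<bar>} \<le> 2 * exp (- L)"
proof -
  have "{x. t \<le> \<bar>card {v\<in>C. Y v x} - \<mu>\<bar>} =
      {x. t \<le> 1 * (card {v\<in>C. Y v x} - \<mu>)} \<union> {x. t \<le> (- 1) * (card {v\<in>C. Y v x} - \<mu>)}"
    by (auto simp: abs_if)
  then have "measure_pmf.prob N {x. t \<le> \<bar>card {v\<in>C. Y v x} - \<mu>\<bar>} \<le>
      measure_pmf.prob N {x. t \<le> 1 * (card {v\<in>C. Y v x} - \<mu>)} +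
      measure_pmf.prob N {x. t \<le> (- 1) * (card {v\<in>C. Y v x} - \<mu>)}"
    by (simp add: measure_Un_le)
  also have "\<dots> \<le> exp (- L) + exp (- L)"
    using assms by (intro add_mono prob_card_deviation_le) auto
  finally show ?thesis by simp
qed

section \<open>Ranks in labellings\<close>

definition label_rank :: "'a set \<Rightarrow> ('a \<Rightarrow> nat) \<Rightarrow> 'a \<Rightarrow> nat" where
  "label_rank S w v = card {u\<in>S - {v}. w u < w v}"

lemma label_rank_less_card:
  assumes "finite S" "v \<in> S"
  shows "label_rank S w v < card S"
proof -
  have "label_rank S w v \<le> card (S - {v})"
    unfolding label_rank_def using assms by (intro card_mono) auto
  also have "\<dots> < card S" using assms by (rule card_Diff1_less)
  finally show ?thesis .
qed

lemma label_rank_strict_mono: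
  assumes "finite S" "a \<in> S" "b \<in> S" "w a < w b"
  shows "label_rank S w a < label_rank S w b"
  unfolding label_rank_def
proof (rule psubset_card_mono)
  have "{u\<in>S - {a}. w u < w a} \<subseteq> {u\<in>S - {b}. w u < w b}"
    using assms(4) by auto
  moreover have "a \<in> {u\<in>S - {b}. w u < w b}" "a \<notin> {u\<in>S - {a}. w u < w a}"
    using assms by auto
  ultimately show "{u\<in>S - {a}. w u < w a} \<subset> {u\<in>S - {b}. w u < w b}" by blast
qed (use assms(1) in simp)

lemma bij_betw_label_rank:
  assumes "finite S" "inj_on w S"
  shows "bij_betw (label_rank S w) S {..<card S}"
proof -
  have "inj_on (label_rank S w) S"
  proof (rule inj_onI, rule ccontr)
    fix a b assume ab: "a \<in> S" "b \<in> S" "label_rank S w a = label_rank S w b" "a \<noteq> b"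
    then have "w a \<noteq> w b" using assms(2) by (auto dest: inj_onD)
    then have "w a < w b \<or> w b < w a" by arith
    then show False using label_rank_strict_mono[OF assms(1)] ab by (metis less_irrefl)
  qed
  moreover have "label_rank S w ` S \<subseteq> {..<card S}"
    using label_rank_less_card[OF assms(1)] by auto
  ultimately show ?thesis
    unfolding bij_betw_def using card_image card_subset_eq[of "{..<card S}"]
      by (metis card_lessThan finite_lessThan)
qed

lemma label_rank_comp_permutes:
  assumes "\<pi> permutes S" "v \<in> S"
  shows "label_rank S (w \<circ> \<pi>) v = label_rank S w (\<pi> v)"
proof -
  have "bij_betw \<pi> (S - {v}) (S - {\<pi> v})"
    using assms by (intro bij_betw_DiffI permutes_imp_bij) (auto simp: permutes_in_image)
  then have "bij_betw \<pi> {u\<in>S - {v}. w (\<pi> u) < w (\<pi> v)} {u\<in>S - {\<pi> v}. w u < w (\<pi> v)}"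
    by (rule bij_betw_Collect) simp
  then show ?thesis unfolding label_rank_def by (simp add: bij_betw_same_card)
qed

lemma comp_permutes_in_PiE_dflt:
  assumes "\<pi> permutes S" "w \<in> PiE_dflt S dflt (\<lambda>_. B)"
  shows "w \<circ> \<pi> \<in> PiE_dflt S dflt (\<lambda>_. B)"
  using assms by (auto simp: PiE_dflt_def permutes_not_in permutes_in_image)

lemma card_inj_labellings_rank_permutes:
  assumes \<pi>: "\<pi> permutes S" and v: "v \<in> S"
  shows "card {w\<in>PiE_dflt S 0 (\<lambda>_. B). inj_on w S \<and> label_rank S w (\<pi> v) = k} =
         card {w\<in>PiE_dflt S 0 (\<lambda>_. B). inj_on w S \<and> label_rank S w v = k}"
proof (rule bij_betw_same_card[of "\<lambda>w. w \<circ> \<pi>"], rule bij_betwI[where g = "\<lambda>w. w \<circ> inv \<pi>"])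
  have \<pi>': "inv \<pi> permutes S" using \<pi> by (rule permutes_inv)
  have inj: "inj_on (w \<circ> p) S" if "p permutes S" "inj_on w S" for w p
    using that by (intro comp_inj_on) (auto simp: permutes_inj_on permutes_image)
  show "(\<lambda>w. w \<circ> \<pi>) \<in> {w\<in>PiE_dflt S 0 (\<lambda>_. B). inj_on w S \<and> label_rank S w (\<pi> v) = k}
      \<rightarrow> {w\<in>PiE_dflt S 0 (\<lambda>_. B). inj_on w S \<and> label_rank S w v = k}"
    using \<pi> v by (auto simp: comp_permutes_in_PiE_dflt inj label_rank_comp_permutes)
  have "label_rank S (w \<circ> inv \<pi>) (\<pi> v) = label_rank S w v" for w
    using label_rank_comp_permutes[OF \<pi>' permutes_in_image[OF \<pi>, THEN iffD2, OF v], of w]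
    by (simp add: permutes_inverses(2)[OF \<pi>])
  then show "(\<lambda>w. w \<circ> inv \<pi>) \<in> {w\<in>PiE_dflt S 0 (\<lambda>_. B). inj_on w S \<and> label_rank S w v = k}
      \<rightarrow> {w\<in>PiE_dflt S 0 (\<lambda>_. B). inj_on w S \<and> label_rank S w (\<pi> v) = k}"
    using \<pi>' by (auto simp: comp_permutes_in_PiE_dflt inj)
qed (auto simp: fun_eq_iff permutes_inverses[OF \<pi>])

lemma sum_card_inj_labellings_rank:
  assumes "finite S" "finite B" "k < card S"
  shows "(\<Sum>i\<in>S. card {w\<in>PiE_dflt S 0 (\<lambda>_. B). inj_on w S \<and> label_rank S w i = k}) =
         card {w\<in>PiE_dflt S 0 (\<lambda>_. B). inj_on w S}"
proof -
  define I where "I = {w\<in>PiE_dflt S 0 (\<lambda>_. B). inj_on w S}"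
  have "finite I" unfolding I_def using assms(1,2) by (simp add: finite_PiE_dflt)
  have "card {i\<in>S. label_rank S w i = k} = 1" if "w \<in> I" for w
  proof -
    have "bij_betw (label_rank S w) {i\<in>S. label_rank S w i = k} {j\<in>{..<card S}. j = k}"
      using bij_betw_label_rank[OF assms(1)] that by (intro bij_betw_Collect) (auto simp: I_def)
    moreover have "{j\<in>{..<card S}. j = k} = {k}" using assms(3) by auto
    ultimately show ?thesis by (simp add: bij_betw_same_card)
  qed
  then have "card I = (\<Sum>w\<in>I. card {i\<in>S. label_rank S w i = k})" by simp
  also have "\<dots> = (\<Sum>w\<in>I. \<Sum>i\<in>S. of_bool (label_rank S w i = k))"
    using assms(1) by (simp add: Int_def)
  also have "\<dots> = (\<Sum>i\<in>S. \<Sum>w\<in>I. of_bool (label_rank S w i = k))"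
    by (rule sum.swap)
  also have "\<dots> = (\<Sum>i\<in>S. card {w\<in>I. label_rank S w i = k})"
    using \<open>finite I\<close> by (simp add: Int_def)
  finally show ?thesis by (simp add: I_def conj_ac)
qed

lemma card_labellings_collision_le:
  assumes "finite S" "finite B" "j \<in> S" "i \<noteq> j"
  shows "card {w\<in>PiE_dflt S 0 (\<lambda>_. B). w i = w j} \<le> card B ^ (card S - 1)"
proof -
  have "inj_on (\<lambda>w. w(j := 0)) {w\<in>PiE_dflt S 0 (\<lambda>_. B). w i = w j}"
  proof (rule inj_onI)
    fix w w' assume "w \<in> {w\<in>PiE_dflt S 0 (\<lambda>_. B). w i = w j}"
      "w' \<in> {w\<in>PiE_dflt S 0 (\<lambda>_. B). w i = w j}" and eq: "w(j := 0) = w'(j := 0)"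
    then have ij: "w j = w i" "w' j = w' i" by auto
    have "w u = w' u" if "u \<noteq> j" for u using fun_cong[OF eq, of u] that by simp
    then have "w i = w' i" using assms(4) .
    show "w = w'"
    proof
      fix u show "w u = w' u" using \<open>w i = w' i\<close> ij \<open>\<And>u. u \<noteq> j \<Longrightarrow> w u = w' u\<close> by (cases "u = j") auto
    qed
  qed
  moreover have "(\<lambda>w. w(j := 0)) ` {w\<in>PiE_dflt S 0 (\<lambda>_. B). w i = w j}
      \<subseteq> PiE_dflt (S - {j}) 0 (\<lambda>_. B)"
    by (auto simp: PiE_dflt_def)
  ultimately have "card {w\<in>PiE_dflt S 0 (\<lambda>_. B). w i = w j} \<le> card (PiE_dflt (S - {j}) 0 (\<lambda>_. B))"
    using assms(1,2) by (intro card_inj_on_le) (auto simp: finite_PiE_dflt)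
  also have "\<dots> = card B ^ (card S - 1)" using assms(1-3)
    by (simp add: card_PiE_dflt card_Diff_singleton)
  finally show ?thesis .
qed

lemma card_non_inj_labellings_le:
  assumes "finite S" "finite B"
  shows "card {w\<in>PiE_dflt S 0 (\<lambda>_. B). \<not> inj_on w S} \<le> card S ^ 2 * card B ^ (card S - 1)"
proof -
  define P where "P = {(i, j)\<in>S \<times> S. i \<noteq> j}"
  have "P \<subseteq> S \<times> S" by (auto simp: P_def)
  then have "finite P" using assms(1) finite_subset by blast
  have "{w\<in>PiE_dflt S 0 (\<lambda>_. B). \<not> inj_on w S} = (\<Union>(i, j)\<in>P. {w\<in>PiE_dflt S 0 (\<lambda>_. B). w i = w j})"
  proof
    show "{w\<in>PiE_dflt S 0 (\<lambda>_. B). \<not> inj_on w S} \<subseteq> (\<Union>(i, j)\<in>P. {w\<in>PiE_dflt S 0 (\<lambda>_. B). w i = w j})"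
    proof
      fix w assume "w \<in> {w\<in>PiE_dflt S 0 (\<lambda>_. B). \<not> inj_on w S}"
      then obtain i j where "(i, j) \<in> P" "w i = w j" "w \<in> PiE_dflt S 0 (\<lambda>_. B)"
        unfolding inj_on_def P_def by auto
      then show "w \<in> (\<Union>(i, j)\<in>P. {w\<in>PiE_dflt S 0 (\<lambda>_. B). w i = w j})" by blast
    qed
  qed (auto simp: P_def inj_on_def)
  then have "card {w\<in>PiE_dflt S 0 (\<lambda>_. B). \<not> inj_on w S}
      \<le> (\<Sum>(i, j)\<in>P. card {w\<in>PiE_dflt S 0 (\<lambda>_. B). w i = w j})"
    using card_UN_le[OF \<open>finite P\<close>] by (simp add: case_prod_unfold)
  also have "\<dots> \<le> (\<Sum>(i, j)\<in>P. card B ^ (card S - 1))"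
    using assms card_labellings_collision_le by (intro sum_mono) (auto simp: P_def)
  also have "\<dots> \<le> card (S \<times> S) * card B ^ (card S - 1)"
    using card_mono[OF _ \<open>P \<subseteq> S \<times> S\<close>] assms(1) by simp
  finally show ?thesis by (simp add: card_cartesian_product power2_eq_square)
qed

lemma count_ratio_deviation_le:
  fixes a b i n m M :: nat
  assumes "i + n = M ^ m" "m * b = i" "b \<le> a" "a \<le> b + n" "n \<le> m ^ 2 * M ^ (m - 1)"
    and "m \<ge> 1" "M > 0"
  shows "\<bar>real a / M ^ m - 1 / m\<bar> \<le> m ^ 2 / M"
proof -
  define P where "P = real M ^ m"
  define \<nu> where "\<nu> = real n / P"
  have P: "P > 0" using assms(7) by (simp add: P_def)
  have m: "real m \<ge> 1" using assms(6) by simp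
  have "real m * real b = P - real n"
    using assms(1,2) unfolding P_def
      by (metis add_diff_cancel_right' of_nat_add of_nat_mult of_nat_power)
  then have b: "real b / P = (1 - \<nu>) / m"
    using P m by (simp add: \<nu>_def field_simps)
  have "real b \<le> real a" "real a \<le> real b + real n" using assms(3,4) by simp_all
  then have a: "real b / P \<le> real a / P" "real a / P \<le> real b / P + \<nu>"
    using P by (simp_all add: \<nu>_def divide_right_mono flip: add_divide_distrib)
  have \<nu>: "0 \<le> \<nu> / m" "\<nu> / m \<le> \<nu>"
    using P m by (simp_all add: \<nu>_def divide_le_eq mult_le_cancel_left1)
  have "\<nu> \<le> real (m ^ 2 * M ^ (m - 1)) / P"
    unfolding \<nu>_def using assms(5) P
      by (intro divide_right_mono) (simp_all only: of_nat_le_iff less_imp_le)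
  also have "\<dots> = m ^ 2 / M"
    using assms(6,7) unfolding P_def by (cases m) (simp_all add: field_simps)
  finally have "\<nu> \<le> m ^ 2 / M" .
  moreover have "(1 - \<nu>) / m = 1 / m - \<nu> / m" by (simp add: diff_divide_distrib)
  ultimately show ?thesis using a b \<nu> unfolding P_def abs_le_iff of_nat_power by linarith
qed

text \<open>
  Swapping labels shows that among injective labellings each vertex has each rank equally
  often, so the error comes only from the non-injective labellings.
\<close>

lemma label_rank_count_deviation:
  assumes S: "finite S" "v \<in> S" "k < card S" and B: "finite B" "B \<noteq> {}"
  shows "\<bar>real (card {w\<in>PiE_dflt S 0 (\<lambda>_. B). label_rank S w v = k}) / card B ^ card S - 1 / card S\<bar>
           \<le> card S ^ 2 / card B"
proof -
  define \<Omega> where "\<Omega> = PiE_dflt S 0 (\<lambda>_. B)"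
  define m where "m = card S"
  define M where "M = card B"
  define A where "A = {w\<in>\<Omega>. label_rank S w v = k}"
  define Ainj where "Ainj = {w\<in>\<Omega>. inj_on w S \<and> label_rank S w v = k}"
  define I where "I = {w\<in>\<Omega>. inj_on w S}"
  define NI where "NI = {w\<in>\<Omega>. \<not> inj_on w S}"
  have "finite \<Omega>" using S B by (simp add: \<Omega>_def finite_PiE_dflt)
  have m: "m \<ge> 1" using S by (auto simp: m_def Suc_le_eq card_gt_0_iff)
  have M: "M > 0" using B by (simp add: M_def card_gt_0_iff)
  have "card I + card NI = M ^ m"
  proof -
    have "I \<union> NI = \<Omega>" "I \<inter> NI = {}" by (auto simp: I_def NI_def)
    then have "card I + card NI = card \<Omega>"
      using \<open>finite \<Omega>\<close> card_Un_disjoint[of I NI] by (simp add: I_def NI_def)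
    then show ?thesis using S B by (simp add: \<Omega>_def M_def m_def card_PiE_dflt)
  qed
  moreover have "m * card Ainj = card I"
  proof -
    have "card {w\<in>\<Omega>. inj_on w S \<and> label_rank S w i = k} = card Ainj" if "i \<in> S" for i
     
        using card_inj_labellings_rank_permutes[OF permutes_swap_id[OF S(2) that] S(2),
            where B = B and k = k]
      by (simp add: Ainj_def \<Omega>_def)
    then show ?thesis
      using sum_card_inj_labellings_rank[OF S(1) B(1) S(3)] by (simp add: m_def I_def \<Omega>_def)
  qed
  moreover have "card Ainj \<le> card A" "card A \<le> card Ainj + card NI"
  proof -
    show "card Ainj \<le> card A" using \<open>finite \<Omega>\<close> by (intro card_mono) (auto simp: Ainj_def A_def)
    have "card A \<le> card (Ainj \<union> NI)" using \<open>finite \<Omega>\<close>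
      by (intro card_mono) (auto simp: Ainj_def A_def NI_def)
    then show "card A \<le> card Ainj + card NI" using card_Un_le le_trans by blast
  qed
  moreover have "card NI \<le> m ^ 2 * M ^ (m - 1)"
    using card_non_inj_labellings_le[OF S(1) B(1)] by (simp add: NI_def \<Omega>_def m_def M_def)
  ultimately have "\<bar>real (card A) / M ^ m - 1 / m\<bar> \<le> m ^ 2 / M"
    using m M by (rule count_ratio_deviation_le)
  then show ?thesis by (simp add: A_def \<Omega>_def m_def M_def)
qed

section \<open>Random labellings and the threshold subgraph\<close>

lemma measurable_PiM_count_space_countable:
  fixes f :: "('a \<Rightarrow> 'b::countable) \<Rightarrow> 'c::countable"
  assumes "finite S"
  shows "f \<in> measurable (PiM S (\<lambda>_. count_space UNIV)) (count_space UNIV)"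
proof (subst measurable_count_space_eq2_countable, intro conjI ballI)
  fix c :: 'c
  have countable: "countable (space (PiM S (\<lambda>_. count_space (UNIV :: 'b set))))"
    unfolding space_PiM using assms by (intro countable_PiE) auto
  show "f -` {c} \<inter> space (PiM S (\<lambda>_. count_space UNIV)) \<in> sets (PiM S (\<lambda>_. count_space UNIV))"
  proof (rule sets.countable)
    fix w assume "w \<in> f -` {c} \<inter> space (PiM S (\<lambda>_. count_space UNIV))"
    then have "w \<in> extensional S" by (simp add: space_PiM PiE_iff)
    then have "{w} = PiE S (\<lambda>i. {w i})" by (simp add: PiE_singleton)
    also have "\<dots> \<in> sets (PiM S (\<lambda>_. count_space UNIV))"
      by (rule sets_PiM_I_finite[OF assms]) simp
    finally show "{w} \<in> sets (PiM S (\<lambda>_. count_space UNIV))" .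
  qed (rule countable_subset[OF _ countable], auto)
qed simp

lemma indep_vars_Pi_pmf_local:
  fixes f :: "'i \<Rightarrow> ('a \<Rightarrow> 'b::countable) \<Rightarrow> 'c::countable"
  assumes "finite V" and S: "\<And>i. i \<in> C \<Longrightarrow> S i \<subseteq> V" and disj: "disjoint_family_on S C"
    and local: "\<And>i x y. i \<in> C \<Longrightarrow> (\<And>u. u \<in> S i \<Longrightarrow> x u = y u) \<Longrightarrow> f i x = f i y"
  shows "prob_space.indep_vars (measure_pmf (Pi_pmf V dflt p)) (\<lambda>_. count_space UNIV) f C"
proof -
  have "prob_space.indep_vars (measure_pmf (Pi_pmf V dflt p))
      (\<lambda>i. PiM (S i) (\<lambda>_. count_space UNIV)) (\<lambda>i x. restrict x (S i)) C"
    using indep_vars_Pi_pmf[OF assms(1)] S disj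
    by (rule prob_space.indep_vars_restrict[OF measure_pmf.prob_space_axioms])
  then have "prob_space.indep_vars (measure_pmf (Pi_pmf V dflt p))
      (\<lambda>_. count_space UNIV) (\<lambda>i x. f i (restrict x (S i))) C"
  proof (rule prob_space.indep_vars_compose2[OF measure_pmf.prob_space_axioms])
    fix i assume "i \<in> C"
    then have "finite (S i)" using finite_subset[OF S assms(1)] by blast
    then show "f i \<in> measurable (PiM (S i) (\<lambda>_. count_space UNIV)) (count_space UNIV)"
      by (rule measurable_PiM_count_space_countable)
  qed
  moreover have "f i (restrict x (S i)) = f i x" if "i \<in> C" for i x
    by (rule local[OF that]) simp
  ultimately show ?thesis
    by (simp cong: prob_space.indep_vars_cong[OF measure_pmf.prob_space_axioms])
qed

definition random_labelling :: "nat \<Rightarrow> 'a set \<Rightarrow> ('a \<Rightarrow> nat) pmf" where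
  "random_labelling M V = Pi_pmf V 0 (\<lambda>_. pmf_of_set {..<M})"

lemma prob_random_labelling_local:
  assumes "finite V" "S \<subseteq> V" "M > 0"
    and local: "\<And>x y. (\<And>u. u \<in> S \<Longrightarrow> x u = y u) \<Longrightarrow> P x \<longleftrightarrow> P y"
  shows "measure_pmf.prob (random_labelling M V) {x. P x} =
     card {w\<in>PiE_dflt S 0 (\<lambda>_. {..<M}). P w} / real M ^ card S"
proof -
  define g where "g x u = (if u \<in> S then x u else 0)" for x :: "'a \<Rightarrow> nat" and u
  have "finite S" using assms(1,2) finite_subset by blast
  have "measure_pmf.prob (random_labelling M V) {x. P x} =
      measure_pmf.prob (random_labelling M V) (g -` {x. P x})"
    using local[of "g _"] by (simp add: g_def)
  also have "\<dots> = measure_pmf.prob (map_pmf g (random_labelling M V)) {x. P x}" by simp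
  also have "map_pmf g (random_labelling M V) = Pi_pmf S 0 (\<lambda>_. pmf_of_set {..<M})"
    unfolding random_labelling_def g_def by (rule Pi_pmf_subset[symmetric, OF assms(1,2)])
  also have "\<dots> = pmf_of_set (PiE_dflt S 0 (\<lambda>_. {..<M}))"
    using \<open>finite S\<close> assms(3) by (intro Pi_pmf_of_set) auto
  also have "measure_pmf.prob \<dots> {x. P x} =
      card (PiE_dflt S 0 (\<lambda>_. {..<M}) \<inter> {x. P x}) / card (PiE_dflt S 0 (\<lambda>_. {..<M}))"
    using \<open>finite S\<close> assms(3) by (intro measure_pmf_of_set) (auto simp: finite_PiE_dflt)
  finally show ?thesis
    using \<open>finite S\<close> by (simp add: card_PiE_dflt Int_def conj_commute)
qed

definition threshold_edges :: "nat \<Rightarrow> 'a set set \<Rightarrow> ('a \<Rightarrow> nat) \<Rightarrow> 'a set set" where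
  "threshold_edges M E x = {e\<in>E. (\<Sum>u\<in>e. x u) + 2 \<le> M}"

lemma degree_threshold_edges:
  assumes "simple_graph V E"
  shows "degree (threshold_edges M E x) v = card {u\<in>nbr E v. x u + x v + 2 \<le> M}"
proof -
  have "u \<noteq> v" if "{u, v} \<in> E" for u
    using that not_mem_nbr[OF assms, of v] by (auto simp: nbr_def)
  then have "nbr (threshold_edges M E x) v = {u\<in>nbr E v. x u + x v + 2 \<le> M}"
    by (auto simp: threshold_edges_def nbr_def)
  then show ?thesis
    by (simp add: degree_eq_card_nbr[OF assms] threshold_edges_def)
qed

lemma degree_threshold_edges_local:
  assumes "simple_graph V E" and xy: "\<And>u. u \<in> cnbr E v \<Longrightarrow> x u = y u"
  shows "degree (threshold_edges M E x) v = degree (threshold_edges M E y) v"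
proof -
  have "x u + x v = y u + y v" if "u \<in> nbr E v" for u
    using that xy by (simp add: cnbr_def)
  then have "{u\<in>nbr E v. x u + x v + 2 \<le> M} = {u\<in>nbr E v. y u + y v + 2 \<le> M}"
    by (metis (no_types, lifting))
  then show ?thesis by (simp add: degree_threshold_edges[OF assms(1)])
qed

lemma card_reflected_label_rank:
  assumes "v \<in> S"
  shows "card {w\<in>PiE_dflt S 0 (\<lambda>_. {..<M}). card {u\<in>S - {v}. w u + w v + 2 \<le> M} = k} =
         card {w\<in>PiE_dflt S 0 (\<lambda>_. {..<M}). label_rank S w v = k}"
proof -
  define \<Omega> where "\<Omega> = PiE_dflt S 0 (\<lambda>_. {..<M})"
  define \<rho> where "\<rho> w = w(v := M - 1 - w v)" for w :: "'a \<Rightarrow> nat"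
  have wv: "w v < M" if "w \<in> \<Omega>" for w using that assms by (auto simp: \<Omega>_def PiE_dflt_def)
  have maps: "\<rho> \<in> \<Omega> \<rightarrow> \<Omega>"
  proof
    fix w assume "w \<in> \<Omega>"
    with wv[OF this] assms show "\<rho> w \<in> \<Omega>" by (auto simp: \<rho>_def \<Omega>_def PiE_dflt_def)
  qed
  have involution: "\<rho> (\<rho> w) = w" if "w \<in> \<Omega>" for w
    using wv[OF that] by (simp add: \<rho>_def Suc_diff_Suc)
  have "bij_betw \<rho> \<Omega> \<Omega>" using maps involution by (intro bij_betwI) auto
  moreover have "label_rank S (\<rho> w) v = k \<longleftrightarrow> card {u\<in>S - {v}. w u + w v + 2 \<le> M} = k"
    if "w \<in> \<Omega>" for w
  proof -
    have "{u\<in>S - {v}. \<rho> w u < \<rho> w v} = {u\<in>S - {v}. w u + w v + 2 \<le> M}"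
      using wv[OF that] by (auto simp: \<rho>_def)
    then show ?thesis by (simp add: label_rank_def)
  qed
  ultimately have "bij_betw \<rho> {w\<in>\<Omega>. card {u\<in>S - {v}. w u + w v + 2 \<le> M} = k}
      {w\<in>\<Omega>. label_rank S w v = k}"
    by (rule bij_betw_Collect[where Q = "\<lambda>w. label_rank S w v = k"])
  then show ?thesis by (simp add: bij_betw_same_card \<Omega>_def)
qed

lemma prob_threshold_degree:
  assumes G: "simple_graph V E" "regular V E d" and v: "v \<in> V" and k: "k \<le> d" and M: "M > 0"
  shows "\<bar>measure_pmf.prob (random_labelling M V) {x. degree (threshold_edges M E x) v = k}
           - 1 / real (d + 1)\<bar> \<le> real (d + 1) ^ 2 / real M"
proof -
  define S where "S = cnbr E v"
  have "finite V" using G(1) by (simp add: simple_graph_def)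
  have SV: "S \<subseteq> V" using v nbr_subset[OF G(1)] by (auto simp: S_def cnbr_def)
  have "finite S" using finite_cnbr[OF G(1)] by (simp add: S_def)
  have vS: "v \<in> S" by (simp add: S_def cnbr_def)
  have nbrS: "nbr E v = S - {v}" using not_mem_nbr[OF G(1)] by (auto simp: S_def cnbr_def)
  have cS: "card S = d + 1" using card_cnbr_regular[OF G v] by (simp add: S_def)
  have "measure_pmf.prob (random_labelling M V) {x. degree (threshold_edges M E x) v = k} =
      card {w\<in>PiE_dflt S 0 (\<lambda>_. {..<M}). degree (threshold_edges M E w) v = k} / real M ^ card S"
  proof (rule prob_random_labelling_local[OF \<open>finite V\<close> SV M])
    fix x y :: "'a \<Rightarrow> nat" assume "\<And>u. u \<in> S \<Longrightarrow> x u = y u"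
    then show "degree (threshold_edges M E x) v = k \<longleftrightarrow> degree (threshold_edges M E y) v = k"
      using degree_threshold_edges_local[OF G(1), of v x y] by (simp add: S_def)
  qed
  also have "\<dots> = card {w\<in>PiE_dflt S 0 (\<lambda>_. {..<M}). card {u\<in>S - {v}. w u + w v + 2 \<le> M} = k}
      / real M ^ card S"
    by (simp add: degree_threshold_edges[OF G(1)] nbrS)
  also have "\<dots> = card {w\<in>PiE_dflt S 0 (\<lambda>_. {..<M}). label_rank S w v = k} / real M ^ card S"
    by (simp only: card_reflected_label_rank[OF vS])
  finally have prob:
      "measure_pmf.prob (random_labelling M V) {x. degree (threshold_edges M E x) v = k}
      = card {w\<in>PiE_dflt S 0 (\<lambda>_. {..<M}). label_rank S w v = k} / real M ^ card S" .
  have "k < card S" "{..<M} \<noteq> {}" using k cS M by auto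
  from label_rank_count_deviation[OF \<open>finite S\<close> vS this(1) finite_lessThan this(2)]
  show ?thesis unfolding prob cS by (simp add: ac_simps)
qed

section \<open>Concentration over the colour classes\<close>

text \<open>
  The deviation \<open>L + a \<mu> + L / (2 a)\<close> allowed for a class with expectation \<open>\<mu>\<close> is affine
  in \<open>\<mu>\<close>, so summed over the colour classes it depends only on the total expectation and
  the number of classes, not on how unbalanced the classes are.
\<close>

lemma threshold_sq_ge:
  fixes L a \<mu> :: real
  assumes "L \<ge> 0" "a > 0" "\<mu> \<ge> 0"
  shows "L * (2 * \<mu> + (L + a * \<mu> + L / (2 * a))) \<le> (L + a * \<mu> + L / (2 * a))^2"
proof -
  define s where "s = a * \<mu> + L / (2 * a)"
  have "0 \<le> (a * \<mu> - L / (2 * a))^2" by simp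
  also have "(a * \<mu> - L / (2 * a))^2 = s^2 - 2 * \<mu> * L"
    using assms by (simp add: s_def power2_eq_square field_simps)
  finally have "2 * \<mu> * L \<le> s^2" by simp
  moreover have "0 \<le> L * s" using assms by (simp add: s_def)
  ultimately have "L * (2 * \<mu> + (L + s)) \<le> (L + s)^2"
    by (simp add: power2_eq_square algebra_simps)
  then show ?thesis by (simp add: s_def add.assoc)
qed

lemma exists_outcome_concentrated:
  fixes N :: "'b pmf" and C :: "'i \<Rightarrow> 'v set" and Y :: "'i \<Rightarrow> 'v \<Rightarrow> 'b \<Rightarrow> bool"
    and \<mu> :: "'i \<Rightarrow> real" and L a :: real
  assumes "finite I" and fin: "\<And>i. i \<in> I \<Longrightarrow> finite (C i)"
    and ind: "\<And>i. i \<in> I \<Longrightarrow> prob_space.indep_vars (measure_pmf N) (\<lambda>_. count_space UNIV) (Y i) (C i)"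
    and \<mu>: "\<And>i. \<mu> i = (\<Sum>v\<in>C i. measure_pmf.prob N {x. Y i v x})"
    and "L > 0" "a > 0" and small: "card I * (2 * exp (- L)) < 1"
  shows "\<exists>x. \<forall>i\<in>I. \<bar>card {v\<in>C i. Y i v x} - \<mu> i\<bar> < L + a * \<mu> i + L / (2 * a)"
proof -
  define bad where "bad i = {x. L + a * \<mu> i + L / (2 * a) \<le> \<bar>card {v\<in>C i. Y i v x} - \<mu> i\<bar>}" for i
  have "measure_pmf.prob N (bad i) \<le> 2 * exp (- L)" if "i \<in> I" for i
  proof -
    have "\<mu> i \<ge> 0" by (simp add: \<mu> sum_nonneg)
    then have "0 < L + a * \<mu> i + L / (2 * a)"
      using \<open>L > 0\<close> \<open>a > 0\<close> by (intro add_pos_pos add_pos_nonneg) auto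
    with \<open>\<mu> i \<ge> 0\<close> show ?thesis unfolding bad_def
      using \<open>L > 0\<close> \<open>a > 0\<close>
      by (intro prob_abs_card_deviation_le[OF fin[OF that] ind[OF that] \<mu>] threshold_sq_ge) auto
  qed
  then have "(\<Sum>i\<in>I. measure_pmf.prob N (bad i)) \<le> card I * (2 * exp (- L))"
    using sum_mono[of I "\<lambda>i. measure_pmf.prob N (bad i)" "\<lambda>_. 2 * exp (- L)"] by simp
  then have "measure_pmf.prob N (\<Union>i\<in>I. bad i) \<le> card I * (2 * exp (- L))"
    using measure_pmf.finite_measure_subadditive_finite[OF \<open>finite I\<close>, of bad N] by simp
  then have "(\<Union>i\<in>I. bad i) \<noteq> UNIV" using small measure_pmf.prob_space[of N] by auto
  then obtain x where "x \<notin> (\<Union>i\<in>I. bad i)" by blast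
  then show ?thesis by (auto simp: bad_def not_le)
qed

lemma indep_threshold_degrees:
  assumes G: "simple_graph V E" and C: "C \<subseteq> V"
    and disj: "\<And>u w. u \<in> C \<Longrightarrow> w \<in> C \<Longrightarrow> u \<noteq> w \<Longrightarrow> cnbr E u \<inter> cnbr E w = {}"
  shows "prob_space.indep_vars (measure_pmf (random_labelling M V)) (\<lambda>_. count_space UNIV)
           (\<lambda>v x. degree (threshold_edges M E x) v = k) C"
  unfolding random_labelling_def
proof (rule indep_vars_Pi_pmf_local)
  show "finite V" using G by (simp add: simple_graph_def)
  show "cnbr E v \<subseteq> V" if "v \<in> C" for v
    using that C nbr_subset[OF G] by (auto simp: cnbr_def)
  show "disjoint_family_on (cnbr E) C" using disj by (auto simp: disjoint_family_on_def)
  fix v and x y :: "'a \<Rightarrow> nat" assume xy: "\<And>u. u \<in> cnbr E v \<Longrightarrow> x u = y u"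
  show "(degree (threshold_edges M E x) v = k) = (degree (threshold_edges M E y) v = k)"
    using degree_threshold_edges_local[OF G xy] by simp
qed

lemma mdeg_eq_sum_colour_classes:
  fixes c :: "'a \<Rightarrow> nat"
  assumes "finite V" "\<forall>v\<in>V. c v \<le> D"
  shows "mdeg V F k = (\<Sum>j\<le>D. card {v\<in>V. c v = j \<and> degree F v = k})"
proof -
  have "(\<Sum>j\<le>D. \<Sum>v\<in>{v\<in>V. c v = j}. of_bool (degree F v = k))
      = (\<Sum>v\<in>V. of_bool (degree F v = k) :: nat)"
    using assms by (intro sum.group) auto
  moreover have "(\<Sum>v\<in>V. of_bool (degree F v = k) :: nat) = mdeg V F k"
    using assms(1) by (simp add: mdeg_def Int_def)
  moreover have "(\<Sum>v\<in>{v\<in>V. c v = j}. of_bool (degree F v = k) :: nat)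
      = card {v\<in>V. c v = j \<and> degree F v = k}"
    for j using assms(1) by (simp add: Int_def conj_ac)
  ultimately show ?thesis by simp
qed

lemma sum_prob_threshold_degree_deviation:
  assumes G: "simple_graph V E" "regular V E d" and "k \<le> d" "M > 0"
  shows "\<bar>(\<Sum>v\<in>V. measure_pmf.prob (random_labelling M V) {x. degree (threshold_edges M E x) v = k})
           - real (card V) / real (d + 1)\<bar> \<le> real (card V) * (real (d + 1) ^ 2 / real M)"
proof -
  have "\<bar>(\<Sum>v\<in>V. measure_pmf.prob (random_labelling M V) {x. degree (threshold_edges M E x) v = k})
      - real (card V) / real (d + 1)\<bar> =
      \<bar>\<Sum>v\<in>V. measure_pmf.prob (random_labelling M V) {x. degree (threshold_edges M E x) v = k}
      - 1 / real (d + 1)\<bar>"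
    by (simp add: sum_subtractf)
  also have "\<dots> \<le> (\<Sum>v\<in>V.
      \<bar>measure_pmf.prob (random_labelling M V) {x. degree (threshold_edges M E x) v = k}
       - 1 / real (d + 1)\<bar>)"
    by (rule sum_abs)
  also have "\<dots> \<le> (\<Sum>v\<in>V. real (d + 1) ^ 2 / real M)"
    by (intro sum_mono prob_threshold_degree[OF G _ assms(3,4)])
  finally show ?thesis by simp
qed

lemma sum_deviation_le:
  fixes X \<mu> :: "'j \<Rightarrow> real" and L a T e :: real
  assumes "finite J" and X: "\<And>j. j \<in> J \<Longrightarrow> \<bar>X j - \<mu> j\<bar> \<le> L + a * \<mu> j + L / (2 * a)"
    and \<mu>: "\<bar>(\<Sum>j\<in>J. \<mu> j) - T\<bar> \<le> e" and "0 \<le> a"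
  shows "\<bar>(\<Sum>j\<in>J. X j) - T\<bar> \<le> card J * L + a * (T + e) + card J * L / (2 * a) + e"
proof -
  have "\<bar>(\<Sum>j\<in>J. X j) - (\<Sum>j\<in>J. \<mu> j)\<bar> \<le> (\<Sum>j\<in>J. \<bar>X j - \<mu> j\<bar>)"
    by (simp only: sum_subtractf[symmetric] sum_abs)
  also have "\<dots> \<le> (\<Sum>j\<in>J. L + a * \<mu> j + L / (2 * a))"
    using X by (rule sum_mono)
  also have "\<dots> = card J * L + a * (\<Sum>j\<in>J. \<mu> j) + card J * L / (2 * a)"
    by (simp add: sum.distrib sum_distrib_left)
  finally have "\<bar>(\<Sum>j\<in>J. X j) - (\<Sum>j\<in>J. \<mu> j)\<bar> \<le> card J * L + a * (\<Sum>j\<in>J. \<mu> j) + card J * L / (2 * a)" .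
  moreover have "a * (\<Sum>j\<in>J. \<mu> j) \<le> a * (T + e)"
    using \<mu> \<open>0 \<le> a\<close> by (intro mult_left_mono) auto
  ultimately show ?thesis using \<mu> by linarith
qed

lemma exists_labelling_class_counts_close:
  fixes c :: "'a \<Rightarrow> nat" and \<mu> :: "nat \<Rightarrow> nat \<Rightarrow> real"
  assumes G: "simple_graph V E" and "L > 0" "a > 0"
    and c: "\<And>u w. u \<in> V \<Longrightarrow> w \<in> V \<Longrightarrow> u \<noteq> w \<Longrightarrow> c u = c w \<Longrightarrow> cnbr E u \<inter> cnbr E w = {}"
    and small: "real (d + 1) * real (D + 1) * 2 * exp (- L) < 1"
    and \<mu>: "\<And>j k. \<mu> j k = (\<Sum>v\<in>{v\<in>V. c v = j}.
             measure_pmf.prob (random_labelling M V) {x. degree (threshold_edges M E x) v = k})"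
  shows "\<exists>x. \<forall>j\<le>D. \<forall>k\<le>d. \<bar>card {v\<in>V. c v = j \<and> degree (threshold_edges M E x) v = k} - \<mu> j k\<bar>
           < L + a * \<mu> j k + L / (2 * a)"
proof -
  have "finite V" using G by (simp add: simple_graph_def)
  define C where "C i = {v\<in>V. c v = fst i}" for i :: "nat \<times> nat"
  define Y where "Y i v x \<longleftrightarrow> degree (threshold_edges M E x) v = snd i"
    for i :: "nat \<times> nat" and v and x :: "'a \<Rightarrow> nat"
  have "\<exists>x. \<forall>i\<in>{..D} \<times> {..d}. \<bar>card {v\<in>C i. Y i v x} - \<mu> (fst i) (snd i)\<bar>
      < L + a * \<mu> (fst i) (snd i) + L / (2 * a)"
  proof (rule exists_outcome_concentrated[OF _ _ _ _ \<open>L > 0\<close> \<open>a > 0\<close>])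
    show "finite (C i)" for i using \<open>finite V\<close> by (simp add: C_def)
    show "prob_space.indep_vars (measure_pmf (random_labelling M V))
        (\<lambda>_. count_space UNIV) (Y i) (C i)"
      for i unfolding Y_def C_def using c by (intro indep_threshold_degrees[OF G]) auto
    show "card ({..D} \<times> {..d}) * (2 * exp (- L)) < 1"
      using small by (simp add: card_cartesian_product algebra_simps)
  qed (auto simp: \<mu> C_def Y_def)
  then show ?thesis by (auto simp: C_def Y_def)
qed

lemma exists_labelling_degree_counts_close:
  assumes G: "simple_graph V E" "regular V E d" and "M > 0" "L > 0" "a > 0"
    and small: "real (d + 1) * real (d^2 + 1) * 2 * exp (- L) < 1"
  defines "n \<equiv> real (card V)" and "\<eta> \<equiv> real (d + 1) ^ 2 / real M"
  shows "\<exists>x. \<forall>k\<le>d. \<bar>real (mdeg V (threshold_edges M E x) k) - n / real (d + 1)\<bar>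
           \<le> real (d^2 + 1) * L + a * (n / real (d + 1) + n * \<eta>)
              + real (d^2 + 1) * L / (2 * a) + n * \<eta>"
proof -
  have "finite V" using G(1) by (simp add: simple_graph_def)
  obtain c where c: "\<forall>v\<in>V. c v \<le> d^2"
    "\<forall>u\<in>V. \<forall>w\<in>V. u \<noteq> w \<and> c u = c w \<longrightarrow> cnbr E u \<inter> cnbr E w = {}"
    using distance2_colouring[OF G] by (elim exE conjE)
  define p where
    "p k v = measure_pmf.prob (random_labelling M V) {x. degree (threshold_edges M E x) v = k}"
    for k v
  define \<mu> where "\<mu> j k = (\<Sum>v\<in>{v\<in>V. c v = j}. p k v)" for j k
  obtain x where x: "\<forall>j\<le>d^2. \<forall>k\<le>d. \<bar>card {v\<in>V. c v = j \<and> degree (threshold_edges M E x) v = k}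
      - \<mu> j k\<bar> < L + a * \<mu> j k + L / (2 * a)"
    using exists_labelling_class_counts_close[OF G(1) \<open>L > 0\<close> \<open>a > 0\<close> _ small, of c \<mu> M] c(2)
    unfolding \<mu>_def p_def by blast
  have "\<bar>real (mdeg V (threshold_edges M E x) k) - n / real (d + 1)\<bar>
      \<le> real (d^2 + 1) * L + a * (n / real (d + 1) + n * \<eta>) + real (d^2 + 1) * L / (2 * a) + n * \<eta>"
    if k: "k \<le> d" for k
  proof -
    have "(\<Sum>j\<le>d^2. \<mu> j k) = (\<Sum>v\<in>V. p k v)"
      unfolding \<mu>_def using \<open>finite V\<close> c(1) by (intro sum.group) auto
    then have "\<bar>(\<Sum>j\<le>d^2. \<mu> j k) - n / real (d + 1)\<bar> \<le> n * \<eta>"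
      using sum_prob_threshold_degree_deviation[OF G k \<open>M > 0\<close>] by (simp add: p_def n_def \<eta>_def)
    with x k have "\<bar>(\<Sum>j\<le>d^2. real (card {v\<in>V. c v = j \<and> degree (threshold_edges M E x) v = k}))
        - n / real (d + 1)\<bar>
        \<le> card {..d^2} * L + a * (n / real (d + 1) + n * \<eta>) + card {..d^2} * L / (2 * a) + n * \<eta>"
      using \<open>a > 0\<close> by (intro sum_deviation_le) (auto intro: less_imp_le)
    then show ?thesis
      using mdeg_eq_sum_colour_classes[OF \<open>finite V\<close> c(1)] by simp
  qed
  then show ?thesis by (intro exI[of _ x] allI impI)
qed

lemma parameter_budget:
  fixes \<epsilon> n D qL \<eta> :: real
  assumes \<epsilon>: "0 < \<epsilon>" "\<epsilon> < 1/3" and "0 \<le> n" "1 \<le> D"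
    and qL: "0 \<le> qL" "qL \<le> \<epsilon>^2 * n / (3 * D)" and \<eta>: "0 \<le> \<eta>" "\<eta> \<le> \<epsilon> / (20 * D)"
  shows "qL + 2 * \<epsilon> / 5 * (n / D + n * \<eta>) + qL / (2 * (2 * \<epsilon> / 5)) + n * \<eta> \<le> \<epsilon> * (n / D)"
proof -
  define T where "T = \<epsilon> * (n / D)"
  have "T \<ge> 0" using assms by (simp add: T_def)
  have qT: "qL \<le> \<epsilon> / 3 * T" using qL(2) by (simp add: T_def power2_eq_square)
  moreover have "\<epsilon> / 3 * T \<le> 1 / 9 * T" using \<epsilon> \<open>T \<ge> 0\<close> by (intro mult_right_mono) auto
  ultimately have "qL \<le> T / 9" by linarith
  moreover have "qL / (2 * (2 * \<epsilon> / 5)) \<le> 5 * T / 12"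
  proof -
    have "qL / (2 * (2 * \<epsilon> / 5)) \<le> \<epsilon> / 3 * T / (2 * (2 * \<epsilon> / 5))"
      using qT \<epsilon> by (intro divide_right_mono) auto
    also have "\<dots> = 5 * T / 12" using \<epsilon> by (simp add: field_simps)
    finally show ?thesis .
  qed
  moreover have n\<eta>: "n * \<eta> \<le> T / 20"
  proof -
    have "n * \<eta> \<le> n * (\<epsilon> / (20 * D))" using \<eta> \<open>0 \<le> n\<close> by (intro mult_left_mono) auto
    also have "\<dots> = T / 20" by (simp add: T_def mult.commute)
    finally show ?thesis .
  qed
  moreover have "2 * \<epsilon> / 5 * (n / D + n * \<eta>) \<le> 2 * T / 5 + T / 150"
  proof -
    have "2 * \<epsilon> / 5 * (n / D + n * \<eta>) = 2 * T / 5 + 2 * \<epsilon> / 5 * (n * \<eta>)"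
      by (simp add: T_def algebra_simps)
    also have "2 * \<epsilon> / 5 * (n * \<eta>) \<le> 2 / 15 * (T / 20)"
      using \<epsilon> n\<eta> \<eta> \<open>0 \<le> n\<close> by (intro mult_mono) auto
    finally show ?thesis by simp
  qed
  ultimately show ?thesis using \<open>T \<ge> 0\<close> unfolding T_def[symmetric] by linarith
qed

lemma exists_nat_div_le:
  fixes c \<delta> :: real
  assumes "0 < \<delta>"
  shows "\<exists>M::nat. 0 < M \<and> c / M \<le> \<delta>"
proof -
  obtain M :: nat where M: "max (c / \<delta>) 0 < M" using reals_Archimedean2 by blast
  then have "0 < M" "c < \<delta> * M" using assms by (auto simp: divide_less_eq mult.commute)
  then show ?thesis using assms by (intro exI[of _ M]) (simp add: divide_le_eq mult.commute)
qed

lemma union_bound_exponent: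
  fixes \<epsilon> L :: real
  assumes "0 < \<epsilon>" and small: "real (d + 1) * real (q + 1) * 2 * exp (- L) < 1"
    and L: "L = \<epsilon>^2 * real (n div (q + 1)) / (3 * real (d + 1))"
  shows "0 < L" "real (q + 1) * L \<le> \<epsilon>^2 * n / (3 * real (d + 1))"
proof -
  have "n div (q + 1) \<noteq> 0"
  proof
    assume "n div (q + 1) = 0"
    moreover have "1 * 1 \<le> real (d + 1) * real (q + 1)" by (intro mult_mono) auto
    ultimately show False using small by (simp add: L)
  qed
  then show "0 < L" using assms(1) by (simp add: L)
  have "(q + 1) * (n div (q + 1)) \<le> n" by (rule times_div_less_eq_dividend)
  then have "real (q + 1) * real (n div (q + 1)) \<le> n"
    by (simp only: of_nat_mult[symmetric] of_nat_le_iff)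
  then have "\<epsilon>^2 * (real (q + 1) * real (n div (q + 1))) / (3 * real (d + 1))
      \<le> \<epsilon>^2 * n / (3 * real (d + 1))"
    by (intro divide_right_mono mult_left_mono) auto
  then show "real (q + 1) * L \<le> \<epsilon>^2 * n / (3 * real (d + 1))"
    by (simp add: L mult.left_commute)
qed

theorem proposition2p4:
  fixes V :: "'a set" and E :: "'a set set" and d n :: nat and \<epsilon> :: real
  assumes "simple_graph V E"
    and "regular V E d"
    and "card V = n"
    and "0 < \<epsilon>" and "\<epsilon> < 1/3"
    and "real (d+1) * real (d^2+1) * 2 *
           exp (-(1/3) * \<epsilon>^2 * real (n div (d^2+1)) * (1 / real (d+1))) < 1"
  shows "\<exists>F. spanning_subgraph V E F \<and>
           (\<forall>k\<le>d. \<bar>real (mdeg V F k) - real n / real (d+1)\<bar> \<le> \<epsilon> * (real n / real (d+1)))"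
proof -
  define L where "L = \<epsilon>^2 * real (n div (d^2 + 1)) / (3 * real (d + 1))"
  have small: "real (d + 1) * real (d^2 + 1) * 2 * exp (- L) < 1"
    using assms(6) by (simp add: L_def)
  note L = union_bound_exponent[OF assms(4) small L_def]
  obtain M :: nat where M: "0 < M" "real (d + 1) ^ 2 / M \<le> \<epsilon> / (20 * real (d + 1))"
    using exists_nat_div_le[of "\<epsilon> / (20 * real (d + 1))"] assms(4) by auto
  define B where
    "B = real (d^2 + 1) * L + 2 * \<epsilon> / 5 * (n / real (d + 1) + n * (real (d + 1) ^ 2 / M))
    + real (d^2 + 1) * L / (2 * (2 * \<epsilon> / 5)) + n * (real (d + 1) ^ 2 / M)"
  have budget: "B \<le> \<epsilon> * (n / real (d + 1))"
    unfolding B_def using assms(4,5) L M(2) by (intro parameter_budget) simp_all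
  obtain x where x: "\<forall>k\<le>d. \<bar>real (mdeg V (threshold_edges M E x) k) - n / real (d + 1)\<bar> \<le> B"
    using exists_labelling_degree_counts_close[OF assms(1,2) M(1) L(1) _ small, of "2 * \<epsilon> / 5"]
      assms(3,4) unfolding B_def by auto
  show ?thesis
  proof (intro exI conjI allI impI)
    show "spanning_subgraph V E (threshold_edges M E x)"
      by (auto simp: spanning_subgraph_def threshold_edges_def)
    fix k assume "k \<le> d"
    show "\<bar>real (mdeg V (threshold_edges M E x) k) - n / real (d + 1)\<bar> \<le> \<epsilon> * (n / real (d + 1))"
      using order_trans[OF x[rule_format, OF \<open>k \<le> d\<close>] budget] .
  qed
qed

end
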